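(* Every locally Hamiltonian form on the momentum phase space $V^*Q$ is locally a Hamiltonian form modulo closed forms: if $H$ is a 1-form on $V^*Q$ with $dH=\gamma\rfloor\mathbf{\Omega}$ for some canonical connection $\gamma$ on $V^*Q\to\mathbb{R}$, then every point of $V^*Q$ has an open neighbourhood $U$ and a smooth function $\mathcal{H}$ on $U$ such that $H-(p_i\,dq^i-\mathcal{H}\,dt)$ is a closed form on $U$.
   Context: Let $Q\to\mathbb{R}$ be a smooth fibre bundle over the time axis $\mathbb{R}$ (Cartesian coordinate $t$, transition functions $t'=t+\mathrm{const}$) with bundle coordinates $(t,q^i)$. The momentum phase space (Legendre bundle) $V^*Q\to\mathbb{R}$ is the vertical cotangent bundle of $Q\to\mathbb{R}$, with holonomic coordinates $(t,q^i,p_i)$; write $\partial_i=\partial/\partial q^i$, $\partial^i=\partial/\partial p_i$; it carries the canonical 3-form $\mathbf{\Omega}=dp_i\wedge dq^i\wedge dt$. A connection on $V^*Q\to\mathbb{R}$ is a vector field $\gamma=\partial_t+\gamma^i\partial_i+\gamma_i\partial^i$; it is canonical if $\gamma\rfloor\mathbf{\Omega}$ is closed. A locally Hamiltonian form is a 1-form $H$ on $V^*Q$ with $dH=\gamma\rfloor\mathbf{\Omega}$ for some canonical connection $\gamma$. The cotangent bundle $T^*Q$ has coordinates $(t,q^i,p_i,p)$ and Liouville form $\Xi=p\,dt+p_i\,dq^i$; $\zeta:T^*Q\to V^*Q$ is the canonical projection. A Hamiltonian form is the pull-back $h^*\Xi$ by a section $h$ of $\zeta$; in coordinates it reads $p_i\,dq^i-\mathcal{H}\,dt$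 with $\mathcal{H}=-p\circ h$ (a local Hamiltonian form is the same on an open subset). *)

theory Defs
  imports "HOL-Analysis.Analysis"
begin

text \<open>Coordinates on a bundle chart of the momentum phase space V*Q: a point is
 (t, q, p) with t real, q = (q^i), p = (p_i) in real^'n.  Tangent vectors have the
 same shape.  A 1-form is represented as a covector field  x |-> omega x  acting on
 tangent vectors by the inner product (components (H_t, H_{q^i}, H^{p_i})).
 Exterior derivatives use the determinant convention
 (a wedge b)(u,v) = a(u)b(v) - a(v)b(u).\<close>

type_synonym 'n vs = "real \<times> (real ^ 'n) \<times> (real ^ 'n)"

fun iter_dderiv :: "('a::real_normed_vector \<Rightarrow> 'b::real_normed_vector) \<Rightarrow> 'a list \<Rightarrow> 'a \<Rightarrow> 'b" where
  "iter_dderiv f [] = f"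
| "iter_dderiv f (v # vs) = (\<lambda>x. frechet_derivative (iter_dderiv f vs) (at x) v)"

definition smooth_on :: "'a::real_normed_vector set \<Rightarrow> ('a \<Rightarrow> 'b::real_normed_vector) \<Rightarrow> bool" where
  "smooth_on U f \<longleftrightarrow> (\<forall>vs. \<forall>x\<in>U. iter_dderiv f vs differentiable (at x))"

definition dt :: "'n::finite vs \<Rightarrow> real" where "dt u = fst u"
definition dq :: "'n::finite \<Rightarrow> 'n vs \<Rightarrow> real" where "dq i u = fst (snd u) $ i"
definition dp :: "'n::finite \<Rightarrow> 'n vs \<Rightarrow> real" where "dp i u = snd (snd u) $ i"

definition wedge3 :: "('a \<Rightarrow> real) \<Rightarrow> ('a \<Rightarrow> real) \<Rightarrow> ('a \<Rightarrow> real) \<Rightarrow> 'a \<Rightarrow> 'a \<Rightarrow> 'a \<Rightarrow> real" where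
  "wedge3 a b c u v w =
     a u * b v * c w - a u * b w * c v - a v * b u * c w
   + a v * b w * c u + a w * b u * c v - a w * b v * c u"

definition Omega :: "'n::finite vs \<Rightarrow> 'n vs \<Rightarrow> 'n vs \<Rightarrow> real" where
  "Omega u v w = (\<Sum>i\<in>UNIV. wedge3 (dp i) (dq i) dt u v w)"

definition d1 :: "('a::real_inner \<Rightarrow> 'a) \<Rightarrow> 'a \<Rightarrow> 'a \<Rightarrow> 'a \<Rightarrow> real" where
  "d1 \<omega> x u v = frechet_derivative \<omega> (at x) u \<bullet> v - frechet_derivative \<omega> (at x) v \<bullet> u"

definition closed1 :: "'a::real_inner set \<Rightarrow> ('a \<Rightarrow> 'a) \<Rightarrow> bool" where
  "closed1 U \<omega> \<longleftrightarrow> (\<forall>x\<in>U. \<forall>u v. d1 \<omega> x u v = 0)"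

definition d2 :: "('a::real_normed_vector \<Rightarrow> 'a \<Rightarrow> 'a \<Rightarrow> real) \<Rightarrow> 'a \<Rightarrow> 'a \<Rightarrow> 'a \<Rightarrow> 'a \<Rightarrow> real" where
  "d2 \<beta> x u v w =
     frechet_derivative (\<lambda>y. \<beta> y v w) (at x) u
   - frechet_derivative (\<lambda>y. \<beta> y u w) (at x) v
   + frechet_derivative (\<lambda>y. \<beta> y u v) (at x) w"

definition contr_Omega :: "('n::finite vs \<Rightarrow> 'n vs) \<Rightarrow> 'n vs \<Rightarrow> 'n vs \<Rightarrow> 'n vs \<Rightarrow> real" where
  "contr_Omega \<gamma> x u v = Omega (\<gamma> x) u v"

text \<open>connection on V*Q -> R over W: smooth vector field gamma = d_t + gamma^i d_i + gamma_i d^i\<close>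
definition connection_on :: "'n::finite vs set \<Rightarrow> ('n vs \<Rightarrow> 'n vs) \<Rightarrow> bool" where
  "connection_on W \<gamma> \<longleftrightarrow> smooth_on W \<gamma> \<and> (\<forall>x\<in>W. fst (\<gamma> x) = 1)"

definition canonical_connection_on :: "'n::finite vs set \<Rightarrow> ('n vs \<Rightarrow> 'n vs) \<Rightarrow> bool" where
  "canonical_connection_on W \<gamma> \<longleftrightarrow> connection_on W \<gamma> \<and>
     (\<forall>x\<in>W. \<forall>u v w. d2 (contr_Omega \<gamma>) x u v w = 0)"

definition locally_hamiltonian_form_on :: "'n::finite vs set \<Rightarrow> ('n vs \<Rightarrow> 'n vs) \<Rightarrow> bool" where
  "locally_hamiltonian_form_on W H \<longleftrightarrow> smooth_on W H \<and>
     (\<exists>\<gamma>. canonical_connection_on W \<gamma> \<and> (\<forall>x\<in>W. \<forall>u v. d1 H x u v = contr_Omega \<gamma> x u v))"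

text \<open>the (local) Hamiltonian form  p_i dq^i - \<H> dt  as a covector field\<close>
definition ham_form :: "('n::finite vs \<Rightarrow> real) \<Rightarrow> 'n vs \<Rightarrow> 'n vs" where
  "ham_form \<H> x = (- \<H> x, snd (snd x), 0)"

end

(*
  Write alpha = gamma^i dp_i - gamma_i dq^i for a connection gamma = d_t + gamma^i d_i + gamma_i d^i.
  In coordinates
    gamma _| Omega = dp_i /\ dq^i - alpha /\ dt   and   d(p_i dq^i - Ham dt) = dp_i /\ dq^i - dHam /\ dt,
  so if dH = gamma _| Omega, then H - (p_i dq^i - Ham dt) is closed as soon as dHam agrees with alpha
  on vertical vectors, i.e. as soon as Ham solves Hamilton's equations d^i Ham = gamma^i,
  d_i Ham = -gamma_i.  Evaluated on two vertical vectors and d_t, the canonical condition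
  d(gamma _| Omega) = 0 says that alpha is closed along each fibre t = const.  The Poincare lemma on
  the fibres, with t as a parameter, therefore gives Ham near a point with fibre coordinates z:
    Ham (t, y) = integral over s in [0, 1] of alpha_(t, z + s (y - z)) (y - z),
  and differentiation under the integral sign shows that Ham is smooth.
*)

theory Submission
  imports Defs
begin

section \<open>Smooth functions\<close>

lemma frechet_derivative_cong_open:
  assumes "open U" "x \<in> U" "\<And>y. y \<in> U \<Longrightarrow> f y = g y"
  shows "frechet_derivative f (at x) = frechet_derivative g (at x)"
  \<comment> \<open>unlike \<open>frechet_derivative_transform_within_open\<close>, without assuming differentiability\<close>
proof -
  have "(f has_derivative D) (at x) \<longleftrightarrow> (g has_derivative D) (at x)" for D
    using assms by (metis has_derivative_transform_within_open)
  then show ?thesis unfolding frechet_derivative_def by simp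
qed

lemma differentiable_cong_open:
  assumes "open U" "x \<in> U" "\<And>y. y \<in> U \<Longrightarrow> f y = g y"
  shows "f differentiable (at x) \<longleftrightarrow> g differentiable (at x)"
  using assms unfolding differentiable_def by (metis has_derivative_transform_within_open)

lemma iter_dderiv_cong_open:
  assumes "open U" "\<And>y. y \<in> U \<Longrightarrow> f y = g y" "y \<in> U"
  shows "iter_dderiv f vs y = iter_dderiv g vs y"
  using assms(3)
proof (induction vs arbitrary: y)
  case Nil
  then show ?case using assms(2) by simp
next
  case (Cons v vs)
  then show ?case
    using frechet_derivative_cong_open[OF assms(1) Cons.prems, of "iter_dderiv f vs"] by simp
qed

lemma iter_dderiv_differentiable_cong_open:
  assumes "open U" "\<And>y. y \<in> U \<Longrightarrow> f y = g y" "x \<in> U"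
  shows "iter_dderiv f vs differentiable (at x) \<longleftrightarrow> iter_dderiv g vs differentiable (at x)"
  by (rule differentiable_cong_open[OF assms(1,3)]) (rule iter_dderiv_cong_open[OF assms(1,2)])

lemma iter_dderiv_append: "iter_dderiv (iter_dderiv f ws) vs = iter_dderiv f (vs @ ws)"
  by (induction vs) auto

lemma iter_dderiv_snoc:
  "iter_dderiv f (vs @ [v]) = iter_dderiv (\<lambda>x. frechet_derivative f (at x) v) vs"
  by (induction vs) auto

lemma smooth_on_iter_dderiv: "smooth_on U f \<Longrightarrow> smooth_on U (iter_dderiv f ws)"
  unfolding smooth_on_def iter_dderiv_append by auto

lemma smooth_on_frechet_derivative:
  "smooth_on U f \<Longrightarrow> smooth_on U (\<lambda>x. frechet_derivative f (at x) v)"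
  using smooth_on_iter_dderiv[of U f "[v]"] by simp

lemma smooth_on_imp_differentiable: "smooth_on U f \<Longrightarrow> x \<in> U \<Longrightarrow> f differentiable (at x)"
  unfolding smooth_on_def by (metis iter_dderiv.simps(1))

lemma smooth_on_imp_continuous_on: "smooth_on U f \<Longrightarrow> continuous_on U f"
  by (meson continuous_at_imp_continuous_on differentiable_imp_continuous_within
      smooth_on_imp_differentiable)

lemma frechet_derivative_at_apply:
  "(f has_derivative f') (at x) \<Longrightarrow> frechet_derivative f (at x) v = f' v"
  by (metis frechet_derivative_at)

definition derivatives_in ::
    "'a::real_normed_vector set \<Rightarrow> (('a \<Rightarrow> 'b::real_normed_vector) \<Rightarrow> bool) \<Rightarrow> ('a \<Rightarrow> 'b) \<Rightarrow> bool" where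
  "derivatives_in U Q f \<longleftrightarrow> (\<forall>x\<in>U. f differentiable (at x)) \<and>
     (\<forall>v. \<exists>g. Q g \<and> (\<forall>x\<in>U. frechet_derivative f (at x) v = g x))"

lemma derivatives_inI:
  assumes "\<And>x. x \<in> U \<Longrightarrow> (f has_derivative f' x) (at x)"
    and "\<And>v. \<exists>g. Q g \<and> (\<forall>x\<in>U. f' x v = g x)"
  shows "derivatives_in U Q f"
  unfolding derivatives_in_def
proof (intro conjI allI ballI)
  fix x assume "x \<in> U"
  then show "f differentiable (at x)" by (rule differentiableI[OF assms(1)])
next
  fix v
  obtain g where "Q g" "\<forall>x\<in>U. f' x v = g x" using assms(2) by blast
  then show "\<exists>g. Q g \<and> (\<forall>x\<in>U. frechet_derivative f (at x) v = g x)"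
    using frechet_derivative_at_apply[OF assms(1)] by auto
qed

lemma derivatives_in_mono:
  "derivatives_in U Q f \<Longrightarrow> (\<And>g. Q g \<Longrightarrow> Q' g) \<Longrightarrow> derivatives_in U Q' f"
  unfolding derivatives_in_def by blast

lemma smooth_on_coinduct:
  assumes "open U" "Q f" "\<And>f. Q f \<Longrightarrow> derivatives_in U Q f"
  shows "smooth_on U f"
proof -
  have "\<forall>f. Q f \<longrightarrow> (\<forall>x\<in>U. iter_dderiv f vs differentiable (at x))" for vs
  proof (induction vs rule: rev_induct)
    case Nil
    then show ?case using assms(3) by (simp add: derivatives_in_def)
  next
    case (snoc v vs)
    show ?case
    proof (intro allI impI ballI)
      fix f x assume "Q f" "x \<in> U"
      then obtain g where g: "Q g" "\<forall>x\<in>U. frechet_derivative f (at x) v = g x"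
        using assms(3) unfolding derivatives_in_def by blast
      have "iter_dderiv g vs differentiable (at x)" using snoc g \<open>x \<in> U\<close> by blast
      moreover have "iter_dderiv (\<lambda>x. frechet_derivative f (at x) v) vs differentiable (at x)
          \<longleftrightarrow> iter_dderiv g vs differentiable (at x)"
        using g(2) by (intro iter_dderiv_differentiable_cong_open[OF assms(1) _ \<open>x \<in> U\<close>]) auto
      ultimately show "iter_dderiv f (vs @ [v]) differentiable (at x)"
        unfolding iter_dderiv_snoc by simp
    qed
  qed
  then show ?thesis using assms(2) unfolding smooth_on_def by auto
qed

lemma smooth_on_imp_derivatives_in: "smooth_on U f \<Longrightarrow> derivatives_in U (smooth_on U) f"
  unfolding derivatives_in_def
  by (blast intro: smooth_on_imp_differentiable smooth_on_frechet_derivative)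

lemma smooth_on_const:
  fixes c :: "'b::real_normed_vector" and U :: "'a::real_normed_vector set"
  assumes "open U"
  shows "smooth_on U (\<lambda>x. c)"
proof (rule smooth_on_coinduct[where Q="\<lambda>h::'a \<Rightarrow> 'b. \<exists>c. h = (\<lambda>x. c)", OF assms])
  fix f :: "'a \<Rightarrow> 'b"
  assume "\<exists>c. f = (\<lambda>x. c)"
  then show "derivatives_in U (\<lambda>h. \<exists>c. h = (\<lambda>x. c)) f"
    by (intro derivatives_inI[where f'="\<lambda>x v. 0"]) auto
qed auto

lemma smooth_on_bounded_linear:
  fixes L :: "'a::real_normed_vector \<Rightarrow> 'b::real_normed_vector"
  assumes "open U" "bounded_linear L"
  shows "smooth_on U L"
proof (rule smooth_on_coinduct[where Q="\<lambda>h::'a \<Rightarrow> 'b. (\<exists>c. h = (\<lambda>x. c)) \<or> bounded_linear h", OF assms(1)])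
  fix f :: "'a \<Rightarrow> 'b"
  assume "(\<exists>c. f = (\<lambda>x. c)) \<or> bounded_linear f"
  then show "derivatives_in U (\<lambda>h. (\<exists>c. h = (\<lambda>x. c)) \<or> bounded_linear h) f"
  proof
    assume "\<exists>c. f = (\<lambda>x. c)"
    then show ?thesis by (intro derivatives_inI[where f'="\<lambda>x v. 0"]) auto
  next
    assume "bounded_linear f"
    then show ?thesis
      by (intro derivatives_inI[where f'="\<lambda>x. f"] bounded_linear_imp_has_derivative) auto
  qed
qed (use assms in auto)

lemma smooth_on_bounded_linear_compose:
  fixes L :: "'b::real_normed_vector \<Rightarrow> 'c::real_normed_vector"
    and f :: "'a::real_normed_vector \<Rightarrow> 'b"
  assumes "open U" "bounded_linear L" "smooth_on U f"
  shows "smooth_on U (\<lambda>x. L (f x))"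
proof (rule smooth_on_coinduct[where Q="\<lambda>h. \<exists>f. smooth_on U f \<and> (\<forall>x\<in>U. h x = L (f x))", OF assms(1)])
  fix h :: "'a \<Rightarrow> 'c"
  assume "\<exists>f. smooth_on U f \<and> (\<forall>x\<in>U. h x = L (f x))"
  then obtain f where f: "smooth_on U f" "\<forall>x\<in>U. h x = L (f x)" by blast
  show "derivatives_in U (\<lambda>h. \<exists>f. smooth_on U f \<and> (\<forall>x\<in>U. h x = L (f x))) h"
  proof (rule derivatives_inI)
    fix x assume "x \<in> U"
    have "((\<lambda>x. L (f x)) has_derivative (\<lambda>v. L (frechet_derivative f (at x) v))) (at x)"
      using bounded_linear.has_derivative[OF assms(2)] frechet_derivative_works
        smooth_on_imp_differentiable[OF f(1) \<open>x \<in> U\<close>] by blast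
    then show "(h has_derivative (\<lambda>v. L (frechet_derivative f (at x) v))) (at x)"
      using has_derivative_transform_within_open[OF _ assms(1) \<open>x \<in> U\<close>] f(2) by metis
  next
    fix v
    show "\<exists>g. (\<exists>f. smooth_on U f \<and> (\<forall>x\<in>U. g x = L (f x))) \<and>
        (\<forall>x\<in>U. L (frechet_derivative f (at x) v) = g x)"
      using smooth_on_frechet_derivative[OF f(1)]
      by (intro exI[of _ "\<lambda>x. L (frechet_derivative f (at x) v)"]) auto
  qed
qed (use assms in auto)

lemma derivatives_in_add:
  fixes a b :: "'a::real_normed_vector \<Rightarrow> 'b::real_normed_vector"
  assumes "derivatives_in U Q a" "derivatives_in U Q b" "\<And>a b. Q a \<Longrightarrow> Q b \<Longrightarrow> Q (\<lambda>x. a x + b x)"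
  shows "derivatives_in U Q (\<lambda>x. a x + b x)"
proof (rule derivatives_inI)
  fix x assume "x \<in> U"
  then show "((\<lambda>x. a x + b x) has_derivative
      (\<lambda>v. frechet_derivative a (at x) v + frechet_derivative b (at x) v)) (at x)"
    using assms(1,2) by (intro has_derivative_add) (auto simp: derivatives_in_def frechet_derivative_works)
next
  fix v
  obtain ka kb where "Q ka" "\<forall>x\<in>U. frechet_derivative a (at x) v = ka x"
    "Q kb" "\<forall>x\<in>U. frechet_derivative b (at x) v = kb x"
    using assms(1,2) unfolding derivatives_in_def by metis
  then show "\<exists>g. Q g \<and> (\<forall>x\<in>U. frechet_derivative a (at x) v + frechet_derivative b (at x) v = g x)"
    using assms(3) by (intro exI[of _ "\<lambda>x. ka x + kb x"]) auto
qed

lemma derivatives_in_mult: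
  fixes a b :: "'a::real_normed_vector \<Rightarrow> real"
  assumes "derivatives_in U Q a" "derivatives_in U Q b" "Q a" "Q b"
    and "\<And>a b. Q a \<Longrightarrow> Q b \<Longrightarrow> Q (\<lambda>x. a x + b x)" "\<And>a b. Q a \<Longrightarrow> Q b \<Longrightarrow> Q (\<lambda>x. a x * b x)"
  shows "derivatives_in U Q (\<lambda>x. a x * b x)"
proof (rule derivatives_inI)
  fix x assume "x \<in> U"
  then show "((\<lambda>x. a x * b x) has_derivative
      (\<lambda>v. a x * frechet_derivative b (at x) v + frechet_derivative a (at x) v * b x)) (at x)"
    using assms(1,2) by (intro has_derivative_mult) (auto simp: derivatives_in_def frechet_derivative_works)
next
  fix v
  obtain ka kb where "Q ka" "\<forall>x\<in>U. frechet_derivative a (at x) v = ka x"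
    "Q kb" "\<forall>x\<in>U. frechet_derivative b (at x) v = kb x"
    using assms(1,2) unfolding derivatives_in_def by metis
  then show "\<exists>g. Q g \<and>
      (\<forall>x\<in>U. a x * frechet_derivative b (at x) v + frechet_derivative a (at x) v * b x = g x)"
    using assms(3-6) by (intro exI[of _ "\<lambda>x. a x * kb x + ka x * b x"]) auto
qed

lemma has_derivative_compose_coordinates:
  fixes g :: "'a::real_normed_vector \<Rightarrow> 'b::euclidean_space" and f :: "'b \<Rightarrow> real"
  assumes "\<And>b. b \<in> Basis \<Longrightarrow> (\<lambda>x. g x \<bullet> b) differentiable (at x)" "f differentiable (at (g x))"
  shows "((\<lambda>x. f (g x)) has_derivative
    (\<lambda>v. \<Sum>b\<in>Basis. frechet_derivative (\<lambda>x. g x \<bullet> b) (at x) v * frechet_derivative f (at (g x)) b)) (at x)"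
proof -
  let ?g' = "\<lambda>v. \<Sum>b\<in>Basis. frechet_derivative (\<lambda>x. g x \<bullet> b) (at x) v *\<^sub>R b"
  have "((\<lambda>x. \<Sum>b\<in>Basis. (g x \<bullet> b) *\<^sub>R b) has_derivative ?g') (at x)"
    using assms(1) by (intro has_derivative_sum has_derivative_scaleR_left) (simp add: frechet_derivative_works)
  then have g': "(g has_derivative ?g') (at x)"
    by (simp add: euclidean_representation)
  have f': "(f has_derivative frechet_derivative f (at (g x))) (at (g x))"
    using assms(2) by (simp add: frechet_derivative_works)
  show ?thesis
    using diff_chain_at[OF g' f'] has_derivative_linear[OF f']
    by (simp add: o_def linear_sum linear_scale)
qed

text \<open>This class is closed under directional derivatives by the chain and product rules,
  so that \<open>smooth_on_coinduct\<close> yields smoothness of composites.\<close>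

inductive smooth_comp_gen ::
    "'a::real_normed_vector set \<Rightarrow> 'b::euclidean_space set \<Rightarrow> ('a \<Rightarrow> 'b) \<Rightarrow> ('a \<Rightarrow> real) \<Rightarrow> bool"
  for U V g where
  smooth: "smooth_on U f \<Longrightarrow> smooth_comp_gen U V g f"
| comp: "smooth_on V f \<Longrightarrow> smooth_comp_gen U V g (\<lambda>x. f (g x))"
| add: "smooth_comp_gen U V g a \<Longrightarrow> smooth_comp_gen U V g b \<Longrightarrow> smooth_comp_gen U V g (\<lambda>x. a x + b x)"
| mult: "smooth_comp_gen U V g a \<Longrightarrow> smooth_comp_gen U V g b \<Longrightarrow> smooth_comp_gen U V g (\<lambda>x. a x * b x)"

lemma smooth_comp_gen_sum:
  assumes "open U" "finite S" "\<And>i. i \<in> S \<Longrightarrow> smooth_comp_gen U V g (F i)"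
  shows "smooth_comp_gen U V g (\<lambda>x. \<Sum>i\<in>S. F i x)"
  using assms(2,3)
proof (induction S rule: finite_induct)
  case empty
  show ?case using smooth_comp_gen.smooth[OF smooth_on_const[OF assms(1)]] by simp
next
  case (insert a S)
  then show ?case using smooth_comp_gen.add[of U V g "F a" "\<lambda>x. \<Sum>i\<in>S. F i x"] by simp
qed

lemma smooth_comp_gen_derivatives_in:
  assumes U: "open U" and gUV: "g ` U \<subseteq> V"
    and g: "\<And>b. b \<in> Basis \<Longrightarrow> smooth_on U (\<lambda>x. g x \<bullet> b)"
    and "smooth_comp_gen U V g h"
  shows "derivatives_in U (smooth_comp_gen U V g) h"
  using \<open>smooth_comp_gen U V g h\<close>
proof induction
  case (smooth f)
  show ?case
    by (rule derivatives_in_mono[OF smooth_on_imp_derivatives_in[OF smooth] smooth_comp_gen.smooth])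
next
  case (comp f)
  show ?case
  proof (rule derivatives_inI)
    fix x assume "x \<in> U"
    then show "((\<lambda>x. f (g x)) has_derivative (\<lambda>v. \<Sum>b\<in>Basis.
        frechet_derivative (\<lambda>x. g x \<bullet> b) (at x) v * frechet_derivative f (at (g x)) b)) (at x)"
      using gUV by (intro has_derivative_compose_coordinates smooth_on_imp_differentiable[OF g]
          smooth_on_imp_differentiable[OF comp]) auto
  next
    fix v
    have "smooth_comp_gen U V g (\<lambda>x. \<Sum>b\<in>Basis.
        frechet_derivative (\<lambda>x. g x \<bullet> b) (at x) v * frechet_derivative f (at (g x)) b)"
      by (intro smooth_comp_gen_sum[OF U finite_Basis] smooth_comp_gen.mult smooth_comp_gen.smooth
          smooth_comp_gen.comp[OF smooth_on_frechet_derivative[OF comp]] smooth_on_frechet_derivative g)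
    then show "\<exists>k. smooth_comp_gen U V g k \<and> (\<forall>x\<in>U. (\<Sum>b\<in>Basis.
        frechet_derivative (\<lambda>x. g x \<bullet> b) (at x) v * frechet_derivative f (at (g x)) b) = k x)"
      by blast
  qed
next
  case (add a b)
  then show ?case by (intro derivatives_in_add smooth_comp_gen.add)
next
  case (mult a b)
  then show ?case by (intro derivatives_in_mult smooth_comp_gen.add smooth_comp_gen.mult)
qed

lemma smooth_comp_gen_imp_smooth_on:
  assumes "open U" "g ` U \<subseteq> V" "\<And>b. b \<in> Basis \<Longrightarrow> smooth_on U (\<lambda>x. g x \<bullet> b)"
    and "smooth_comp_gen U V g h"
  shows "smooth_on U h"
  by (rule smooth_on_coinduct[OF assms(1,4) smooth_comp_gen_derivatives_in[OF assms(1-3)]])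

lemma smooth_on_add:
  fixes a b :: "'a::euclidean_space \<Rightarrow> real"
  assumes "open U" "smooth_on U a" "smooth_on U b"
  shows "smooth_on U (\<lambda>x. a x + b x)"
  by (rule smooth_comp_gen_imp_smooth_on[where g="\<lambda>x. x" and V=UNIV, OF assms(1)])
    (use assms smooth_on_bounded_linear[OF assms(1) bounded_linear_inner_left] in
      \<open>auto intro: smooth_comp_gen.add smooth_comp_gen.smooth\<close>)

lemma smooth_on_mult:
  fixes a b :: "'a::euclidean_space \<Rightarrow> real"
  assumes "open U" "smooth_on U a" "smooth_on U b"
  shows "smooth_on U (\<lambda>x. a x * b x)"
  by (rule smooth_comp_gen_imp_smooth_on[where g="\<lambda>x. x" and V=UNIV, OF assms(1)])
    (use assms smooth_on_bounded_linear[OF assms(1) bounded_linear_inner_left] in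
      \<open>auto intro: smooth_comp_gen.mult smooth_comp_gen.smooth\<close>)

section \<open>Differentiation under the integral sign\<close>

definition param_integral :: "('a \<times> real \<Rightarrow> real) \<Rightarrow> 'a \<Rightarrow> real" where
  "param_integral \<Phi> x = integral {0..1} (\<lambda>s. \<Phi> (x, s))"

lemma has_derivative_partial_fst:
  assumes "\<Phi> differentiable at (x, t)"
  shows "((\<lambda>x. \<Phi> (x, t)) has_derivative (\<lambda>v. frechet_derivative \<Phi> (at (x, t)) (v, 0))) (at x)"
  using diff_chain_at[OF has_derivative_Pair[OF has_derivative_ident has_derivative_const]
      assms[unfolded frechet_derivative_works]]
  by (simp add: o_def)

lemma bounded_linear_partial_fst:
  assumes "\<Phi> differentiable at y"
  shows "bounded_linear (\<lambda>v. frechet_derivative \<Phi> (at y) (v, 0))"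
  by (rule bounded_linear_compose[OF has_derivative_bounded_linear[OF assms[unfolded frechet_derivative_works]]
        bounded_linear_Pair[OF bounded_linear_ident bounded_linear_zero]])

lemma continuous_on_partial_fst_blinfun:
  fixes \<Phi> :: "'a::euclidean_space \<times> real \<Rightarrow> real"
  assumes "smooth_on S \<Phi>" "K \<subseteq> S"
  shows "continuous_on K (\<lambda>(x, t). Blinfun (\<lambda>v. frechet_derivative \<Phi> (at (x, t)) (v, 0)))"
proof (rule continuous_on_blinfun_componentwise)
  fix i :: 'a
  have cont: "continuous_on K (\<lambda>y. frechet_derivative \<Phi> (at y) (i, 0))"
    using smooth_on_imp_continuous_on[OF smooth_on_frechet_derivative[OF assms(1)]] assms(2)
    by (rule continuous_on_subset)
  have apply_eq: "blinfun_apply (Blinfun (\<lambda>v. frechet_derivative \<Phi> (at y) (v, 0))) i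
      = frechet_derivative \<Phi> (at y) (i, 0)" if "y \<in> K" for y
  proof -
    have "y \<in> S" using that assms(2) by blast
    then show ?thesis
      using bounded_linear_partial_fst[OF smooth_on_imp_differentiable[OF assms(1)]]
      by (simp add: bounded_linear_Blinfun_apply)
  qed
  show "continuous_on K (\<lambda>y. blinfun_apply
      (case y of (x, t) \<Rightarrow> Blinfun (\<lambda>v. frechet_derivative \<Phi> (at (x, t)) (v, 0))) i)"
    by (rule continuous_on_eq[OF cont]) (simp add: case_prod_beta apply_eq)
qed

lemma has_derivative_param_integral:
  fixes \<Phi> :: "'a::euclidean_space \<times> real \<Rightarrow> real"
  assumes U: "open U" "convex U" and T: "open T" "{0..1} \<subseteq> T"
    and \<Phi>: "smooth_on (U \<times> T) \<Phi>" and "x0 \<in> U"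
  shows "(param_integral \<Phi> has_derivative
      (\<lambda>v. integral {0..1} (\<lambda>s. frechet_derivative \<Phi> (at (x0, s)) (v, 0)))) (at x0)"
proof -
  define \<Phi>' where "\<Phi>' x t = Blinfun (\<lambda>v. frechet_derivative \<Phi> (at (x, t)) (v, 0))" for x t
  have \<Phi>'_apply: "blinfun_apply (\<Phi>' x t) = (\<lambda>v. frechet_derivative \<Phi> (at (x, t)) (v, 0))"
    if "x \<in> U" "t \<in> T" for x t
    using bounded_linear_partial_fst[OF smooth_on_imp_differentiable[OF \<Phi>]] that
    by (simp add: \<Phi>'_def bounded_linear_Blinfun_apply)
  have \<Phi>_partial: "((\<lambda>x. \<Phi> (x, t)) has_derivative blinfun_apply (\<Phi>' x t)) (at x)"
    if "x \<in> U" "t \<in> T" for x t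
    using has_derivative_partial_fst[of \<Phi> x t] smooth_on_imp_differentiable[OF \<Phi>] that
    by (simp add: \<Phi>'_apply)
  have cont_\<Phi>': "continuous_on (U \<times> cbox 0 1) (\<lambda>(x, t). \<Phi>' x t)"
    unfolding \<Phi>'_def using T by (intro continuous_on_partial_fst_blinfun[OF \<Phi>]) (auto simp: cbox_interval)
  have leibniz: "((\<lambda>x. integral (cbox 0 1) (\<lambda>t. \<Phi> (x, t))) has_derivative
      blinfun_apply (integral (cbox 0 1) (\<Phi>' x0))) (at x0 within U)"
  proof (rule leibniz_rule[where f="\<lambda>x t. \<Phi> (x, t)", OF _ _ cont_\<Phi>' \<open>x0 \<in> U\<close> U(2)])
    fix x t assume "x \<in> U" "t \<in> cbox (0::real) 1"
    then show "((\<lambda>x. \<Phi> (x, t)) has_derivative blinfun_apply (\<Phi>' x t)) (at x within U)"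
      using \<Phi>_partial T has_derivative_at_withinI by (metis cbox_interval subsetD)
  next
    fix x assume "x \<in> U"
    have "continuous_on {0..1} (\<lambda>t. \<Phi> (x, t))"
      by (rule continuous_on_compose2[OF smooth_on_imp_continuous_on[OF \<Phi>]])
        (use \<open>x \<in> U\<close> T in \<open>auto intro!: continuous_intros\<close>)
    then show "(\<lambda>t. \<Phi> (x, t)) integrable_on cbox 0 1"
      by (simp add: cbox_interval integrable_continuous_interval)
  qed
  have "continuous_on {0..1} (\<Phi>' x0)"
    by (rule continuous_on_compose2[OF cont_\<Phi>', where f="\<lambda>t. (x0, t)", simplified])
      (use \<open>x0 \<in> U\<close> in \<open>auto intro!: continuous_intros simp: cbox_interval\<close>)
  then have "blinfun_apply (integral (cbox 0 1) (\<Phi>' x0))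
      = (\<lambda>v. integral {0..1} (\<lambda>s. frechet_derivative \<Phi> (at (x0, s)) (v, 0)))"
    using \<Phi>'_apply \<open>x0 \<in> U\<close> T
    by (auto simp: fun_eq_iff cbox_interval blinfun_apply_integral integrable_continuous_interval
        intro!: integral_cong)
  with leibniz show ?thesis
    unfolding param_integral_def using at_within_open[OF \<open>x0 \<in> U\<close> U(1)] by (simp add: cbox_interval)
qed

lemma iter_dderiv_param_integral:
  fixes \<Phi> :: "'a::euclidean_space \<times> real \<Rightarrow> real"
  assumes U: "open U" "convex U" and T: "open T" "{0..1} \<subseteq> T" and \<Phi>: "smooth_on (U \<times> T) \<Phi>"
  shows "x \<in> U \<Longrightarrow> iter_dderiv (param_integral \<Phi>) vs x
    = param_integral (iter_dderiv \<Phi> (map (\<lambda>v. (v, 0)) vs)) x"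
proof (induction vs arbitrary: x)
  case (Cons v vs)
  let ?\<Phi>' = "iter_dderiv \<Phi> (map (\<lambda>v. (v, 0)) vs)"
  have "iter_dderiv (param_integral \<Phi>) (v # vs) x = frechet_derivative (param_integral ?\<Phi>') (at x) v"
    using frechet_derivative_cong_open[OF U(1) Cons.prems, of "iter_dderiv (param_integral \<Phi>) vs"] Cons
    by simp
  also have "\<dots> = integral {0..1} (\<lambda>s. frechet_derivative ?\<Phi>' (at (x, s)) (v, 0))"
    by (rule frechet_derivative_at_apply[OF
          has_derivative_param_integral[OF U T smooth_on_iter_dderiv[OF \<Phi>] Cons.prems]])
  also have "\<dots> = param_integral (iter_dderiv \<Phi> (map (\<lambda>v. (v, 0)) (v # vs))) x"
    by (simp add: param_integral_def)
  finally show ?case .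
qed simp

lemma smooth_on_param_integral:
  fixes \<Phi> :: "'a::euclidean_space \<times> real \<Rightarrow> real"
  assumes U: "open U" "convex U" and T: "open T" "{0..1} \<subseteq> T" and \<Phi>: "smooth_on (U \<times> T) \<Phi>"
  shows "smooth_on U (param_integral \<Phi>)"
  unfolding smooth_on_def
proof (intro allI ballI)
  fix vs x assume "x \<in> U"
  have "param_integral (iter_dderiv \<Phi> (map (\<lambda>v. (v, 0)) vs)) differentiable (at x)"
    using has_derivative_param_integral[OF U T smooth_on_iter_dderiv[OF \<Phi>] \<open>x \<in> U\<close>]
    by (rule differentiableI)
  then show "iter_dderiv (param_integral \<Phi>) vs differentiable (at x)"
    using differentiable_cong_open[OF U(1) \<open>x \<in> U\<close>] iter_dderiv_param_integral[OF U T \<Phi>] by blast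
qed

section \<open>The Poincare lemma along the fibres\<close>

lemma smooth_on_affine:
  fixes L :: "'a::euclidean_space \<Rightarrow> real"
  assumes "open U" "bounded_linear L"
  shows "smooth_on U (\<lambda>x. L x + c)"
  using assms by (intro smooth_on_add smooth_on_bounded_linear smooth_on_const)

definition fibre_contraction :: "'a \<times> 'b::real_vector \<Rightarrow> 'a \<times> 'b \<Rightarrow> real \<Rightarrow> 'a \<times> 'b" where
  "fibre_contraction z x s = (fst x, snd z + s *\<^sub>R (snd x - snd z))"

lemma fibre_contraction_1 [simp]: "fibre_contraction z x 1 = x"
  by (simp add: fibre_contraction_def)

lemma fibre_contraction_in_ball:
  fixes z x :: "'a::real_normed_vector \<times> 'b::real_normed_vector"
  assumes "x \<in> ball z r" "\<bar>s\<bar> \<le> 2"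
  shows "fibre_contraction z x s \<in> ball z (3 * r)"
proof -
  have "fibre_contraction z x s - z = (fst (x - z), s *\<^sub>R snd (x - z))"
    by (simp add: fibre_contraction_def prod_eq_iff)
  then have "norm (fibre_contraction z x s - z) \<le> norm (fst (x - z)) + norm (s *\<^sub>R snd (x - z))"
    using norm_Pair_le by metis
  also have "\<dots> \<le> norm (x - z) + 2 * norm (x - z)"
  proof -
    have "norm (fst (x - z)) \<le> norm (x - z)" "norm (snd (x - z)) \<le> norm (x - z)"
      by (metis norm_fst_le norm_snd_le prod.collapse)+
    moreover from this(2) have "\<bar>s\<bar> * norm (snd (x - z)) \<le> 2 * norm (x - z)"
      using assms(2) by (intro mult_mono) auto
    ultimately show ?thesis by simp
  qed
  also have "\<dots> < 3 * r"
    using assms(1) by (simp add: dist_norm norm_minus_commute)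
  finally show ?thesis by (simp add: dist_norm norm_minus_commute)
qed

lemma smooth_on_inner_fibre_contraction:
  fixes z b :: "'a::euclidean_space \<times> 'b::euclidean_space"
  assumes "open S"
  shows "smooth_on S (\<lambda>y. fibre_contraction z (fst y) (snd y) \<bullet> b)"
proof -
  have "fibre_contraction z x s \<bullet> b
      = (fst x \<bullet> fst b + snd z \<bullet> snd b) + s * (snd x \<bullet> snd b + - (snd z \<bullet> snd b))" for x s
    by (simp add: fibre_contraction_def inner_prod_def inner_add_left inner_diff_left algebra_simps)
  then show ?thesis
    using assms by (simp only:) (intro smooth_on_add smooth_on_mult smooth_on_affine
        smooth_on_bounded_linear bounded_linear_intros)
qed

lemma smooth_on_homotopy_integrand:
  fixes A :: "'a::euclidean_space \<times> 'b::euclidean_space \<Rightarrow> 'a \<times> 'b"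
  assumes S: "open S" and W: "open W" "smooth_on W A"
    and SW: "\<And>y. y \<in> S \<Longrightarrow> fibre_contraction z (fst y) (snd y) \<in> W"
  shows "smooth_on S (\<lambda>y. A (fibre_contraction z (fst y) (snd y)) \<bullet> (0, snd (fst y) - snd z))"
proof -
  let ?g = "\<lambda>y. fibre_contraction z (fst y) (snd y)"
  have w: "smooth_on S (\<lambda>y. (0, snd (fst y) - snd z) \<bullet> b)" for b :: "'a \<times> 'b"
  proof -
    have "(0, snd (fst y) - snd z) \<bullet> b = snd (fst y) \<bullet> snd b + - (snd z \<bullet> snd b)" for y :: "('a \<times> 'b) \<times> real"
      by (simp add: inner_prod_def inner_diff_left)
    then show ?thesis
      using S by (simp only:) (intro smooth_on_affine bounded_linear_intros)
  qed
  have gSW: "?g ` S \<subseteq> W"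
    using SW by auto
  have A: "smooth_on W (\<lambda>x. A x \<bullet> b)" for b
    by (rule smooth_on_bounded_linear_compose[OF W(1) bounded_linear_inner_left W(2)])
  have "smooth_comp_gen S W ?g (\<lambda>y. (A (?g y) \<bullet> b) * ((0, snd (fst y) - snd z) \<bullet> b))" for b
    by (rule smooth_comp_gen.mult[OF smooth_comp_gen.comp[OF A] smooth_comp_gen.smooth[OF w]])
  then have "smooth_comp_gen S W ?g (\<lambda>y. \<Sum>b\<in>Basis. (A (?g y) \<bullet> b) * ((0, snd (fst y) - snd z) \<bullet> b))"
    by (rule smooth_comp_gen_sum[OF S finite_Basis])
  then have "smooth_on S (\<lambda>y. \<Sum>b\<in>Basis. (A (?g y) \<bullet> b) * ((0, snd (fst y) - snd z) \<bullet> b))"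
    by (rule smooth_comp_gen_imp_smooth_on[OF S gSW smooth_on_inner_fibre_contraction[OF S]])
  then show ?thesis by (simp only: euclidean_inner[symmetric])
qed

lemma frechet_derivative_homotopy_integrand:
  fixes A :: "'a::euclidean_space \<times> 'b::euclidean_space \<Rightarrow> 'a \<times> 'b"
  assumes "A differentiable at (fibre_contraction z x s)" "fst v = 0"
  shows "frechet_derivative (\<lambda>y. A (fibre_contraction z (fst y) (snd y)) \<bullet> (0, snd (fst y) - snd z))
      (at (x, s)) (v, 0)
    = s * (frechet_derivative A (at (fibre_contraction z x s)) v \<bullet> (0, snd x - snd z))
      + A (fibre_contraction z x s) \<bullet> v"
proof -
  let ?c = "fibre_contraction z x s" and ?A' = "frechet_derivative A (at (fibre_contraction z x s))"
  have A': "(A has_derivative ?A') (at ((\<lambda>y. fibre_contraction z (fst y) (snd y)) (x, s)))"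
    using assms(1) by (simp add: frechet_derivative_works)
  have c': "((\<lambda>y. fibre_contraction z (fst y) (snd y)) has_derivative
      (\<lambda>h. (fst (fst h), snd h *\<^sub>R (snd x - snd z) + s *\<^sub>R snd (fst h)))) (at (x, s))"
    unfolding fibre_contraction_def by (auto intro!: derivative_eq_intros simp: algebra_simps)
  have w': "((\<lambda>y. (0::'a, snd (fst y) - snd z)) has_derivative (\<lambda>h. (0, snd (fst h)))) (at (x, s))"
    by (auto intro!: derivative_eq_intros)
  have "((\<lambda>y. A (fibre_contraction z (fst y) (snd y)) \<bullet> (0, snd (fst y) - snd z)) has_derivative
      (\<lambda>h. A ?c \<bullet> (0, snd (fst h)) + ?A' (fst (fst h), snd h *\<^sub>R (snd x - snd z) + s *\<^sub>R snd (fst h))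
        \<bullet> (0, snd x - snd z))) (at (x, s))"
    using has_derivative_inner[OF diff_chain_at[OF c' A'] w'] by (simp add: o_def)
  moreover have "(fst v, s *\<^sub>R snd v) = s *\<^sub>R v" "(0, snd v) = v"
    using assms(2) by (auto simp: prod_eq_iff)
  moreover have "?A' (s *\<^sub>R v) = s *\<^sub>R ?A' v"
    using linear_frechet_derivative[OF assms(1)] by (rule linear_scale)
  ultimately show ?thesis
    by (simp add: frechet_derivative_at_apply)
qed

lemma integral_homotopy_integrand:
  fixes A :: "'a::euclidean_space \<times> 'b::euclidean_space \<Rightarrow> 'a \<times> 'b"
  assumes "\<And>s. s \<in> {0..1} \<Longrightarrow> A differentiable at (fibre_contraction z x s)"
  shows "integral {0..1} (\<lambda>s. s * (frechet_derivative A (at (fibre_contraction z x s)) (0, snd x - snd z) \<bullet> v)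
      + A (fibre_contraction z x s) \<bullet> v) = A x \<bullet> v"
proof -
  let ?F = "\<lambda>s. s * (A (fibre_contraction z x s) \<bullet> v)" and ?w = "(0, snd x - snd z)"
  have F': "(?F has_vector_derivative
      s * (frechet_derivative A (at (fibre_contraction z x s)) ?w \<bullet> v) + A (fibre_contraction z x s) \<bullet> v)
      (at s within {0..1})" if "s \<in> {0..1}" for s
  proof -
    let ?A' = "frechet_derivative A (at (fibre_contraction z x s))"
    have c': "((\<lambda>s. fibre_contraction z x s) has_derivative (\<lambda>h. h *\<^sub>R ?w)) (at s)"
      unfolding fibre_contraction_def by (auto intro!: derivative_eq_intros)
    have A': "(A has_derivative ?A') (at ((\<lambda>s. fibre_contraction z x s) s))"
      using assms[OF that] by (simp add: frechet_derivative_works)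
    have "((\<lambda>s. A (fibre_contraction z x s) \<bullet> v) has_derivative (\<lambda>h. ?A' (h *\<^sub>R ?w) \<bullet> v)) (at s)"
      using bounded_linear.has_derivative[OF bounded_linear_inner_left diff_chain_at[OF c' A']]
      by (simp add: o_def)
    then have F': "(?F has_derivative (\<lambda>h. s * (?A' (h *\<^sub>R ?w) \<bullet> v) + h * (A (fibre_contraction z x s) \<bullet> v))) (at s)"
      using has_derivative_mult[OF has_derivative_ident] by fastforce
    have scale: "?A' (h *\<^sub>R ?w) = h *\<^sub>R ?A' ?w" for h
      using linear_frechet_derivative[OF assms[OF that]] by (rule linear_scale)
    have "(?F has_derivative (\<lambda>h. h *\<^sub>R (s * (?A' ?w \<bullet> v) + A (fibre_contraction z x s) \<bullet> v))) (at s)"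
      by (rule has_derivative_eq_rhs[OF F']) (simp add: fun_eq_iff scale algebra_simps del: scaleR_Pair)
    then show ?thesis
      unfolding has_vector_derivative_def by (rule has_derivative_at_withinI)
  qed
  have "((\<lambda>s. s * (frechet_derivative A (at (fibre_contraction z x s)) ?w \<bullet> v)
      + A (fibre_contraction z x s) \<bullet> v) has_integral ?F 1 - ?F 0) {0..1}"
    by (rule fundamental_theorem_of_calculus) (use F' in auto)
  then show ?thesis by (simp add: integral_unique)
qed

lemma fibrewise_poincare_lemma:
  fixes A :: "'a::euclidean_space \<times> 'b::euclidean_space \<Rightarrow> 'a \<times> 'b"
  assumes W: "open W" "z \<in> W" "smooth_on W A"
    and symmetric: "\<And>x u v. x \<in> W \<Longrightarrow> fst u = 0 \<Longrightarrow> fst v = 0 \<Longrightarrow>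
      frechet_derivative A (at x) u \<bullet> v = frechet_derivative A (at x) v \<bullet> u"
  shows "\<exists>U f. open U \<and> z \<in> U \<and> U \<subseteq> W \<and> smooth_on U f \<and>
    (\<forall>x\<in>U. \<forall>v. fst v = 0 \<longrightarrow> frechet_derivative f (at x) v = A x \<bullet> v)"
proof -
  obtain R where R: "R > 0" "ball z R \<subseteq> W"
    using W open_contains_ball by blast
  define U where "U = ball z (R / 3)"
  define T where "T = {-1<..<(2::real)}"
    \<comment> \<open>an open neighbourhood of \<open>[0, 1]\<close>, so that the integrand is smooth on an open set\<close>
  define \<Phi> where "\<Phi> = (\<lambda>y. A (fibre_contraction z (fst y) (snd y)) \<bullet> (0, snd (fst y) - snd z))"
  have U: "open U" "convex U" "z \<in> U" "U \<subseteq> W"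
    using R by (auto simp: U_def)
  have T: "open T" "{0..1} \<subseteq> T"
    by (auto simp: T_def)
  have contraction_in_W: "fibre_contraction z x s \<in> W" if "x \<in> U" "s \<in> T" for x s
    using fibre_contraction_in_ball[of x z "R / 3" s] that R(2) by (auto simp: U_def T_def)
  have \<Phi>: "smooth_on (U \<times> T) \<Phi>"
    unfolding \<Phi>_def using U T W contraction_in_W
    by (intro smooth_on_homotopy_integrand) (auto simp: open_Times)
  have "frechet_derivative (param_integral \<Phi>) (at x) v = A x \<bullet> v" if "x \<in> U" "fst v = 0" for x v
  proof -
    let ?w = "(0, snd x - snd z)"
    have A': "A differentiable at (fibre_contraction z x s)" if "s \<in> T" for s
      using smooth_on_imp_differentiable[OF W(3) contraction_in_W[OF \<open>x \<in> U\<close> that]] .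
    have "frechet_derivative (param_integral \<Phi>) (at x) v
        = integral {0..1} (\<lambda>s. frechet_derivative \<Phi> (at (x, s)) (v, 0))"
      by (rule frechet_derivative_at_apply[OF has_derivative_param_integral[OF U(1,2) T \<Phi> \<open>x \<in> U\<close>]])
    also have "\<dots> = integral {0..1} (\<lambda>s. s * (frechet_derivative A (at (fibre_contraction z x s)) ?w \<bullet> v)
        + A (fibre_contraction z x s) \<bullet> v)"
    proof (rule integral_cong)
      \<comment> \<open>by the symmetry hypothesis the \<open>x\<close>-derivative of the integrand is an \<open>s\<close>-derivative\<close>
      fix s :: real assume "s \<in> {0..1}"
      then have "s \<in> T" using T by blast
      show "frechet_derivative \<Phi> (at (x, s)) (v, 0) = s * (frechet_derivative A (at (fibre_contraction z x s)) ?w \<bullet> v)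
          + A (fibre_contraction z x s) \<bullet> v"
        unfolding \<Phi>_def frechet_derivative_homotopy_integrand[OF A'[OF \<open>s \<in> T\<close>] \<open>fst v = 0\<close>]
        using symmetric[OF contraction_in_W[OF \<open>x \<in> U\<close> \<open>s \<in> T\<close>] \<open>fst v = 0\<close>, of ?w] by simp
    qed
    also have "\<dots> = A x \<bullet> v"
      using A' T by (intro integral_homotopy_integrand) blast
    finally show ?thesis .
  qed
  then show ?thesis
    using U smooth_on_param_integral[OF U(1,2) T \<Phi>] by blast
qed

section \<open>Canonical connections\<close>

text \<open>For \<open>a = \<gamma> x = (1, \<gamma>\<^sup>i, \<gamma>\<^sub>i)\<close> this is the covector of
  \<open>\<gamma>\<^sup>i dp\<^sub>i - \<gamma>\<^sub>i dq\<^sup>i\<close>.\<close>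

definition hamiltonian_covector :: "'n::finite vs \<Rightarrow> 'n vs" where
  "hamiltonian_covector a = (0, - snd (snd a), fst (snd a))"

lemma bounded_linear_hamiltonian_covector: "bounded_linear hamiltonian_covector"
  unfolding hamiltonian_covector_def by (intro bounded_linear_intros bounded_linear_minus)

lemma Omega_expand:
  "Omega a u v = (\<Sum>i\<in>UNIV. dp i a * (dq i u * dt v - dq i v * dt u)
    - dp i u * (dq i a * dt v - dq i v * dt a) + dp i v * (dq i a * dt u - dq i u * dt a))"
  unfolding Omega_def wedge3_def by (rule sum.cong) (simp_all add: algebra_simps)

lemma bounded_linear_Omega_left: "bounded_linear (\<lambda>a. Omega a u v)"
proof -
  have "linear (\<lambda>a. Omega a u v)"
    by (rule linearI) (simp_all add: Omega_expand dp_def dq_def dt_def algebra_simps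
        sum.distrib[symmetric] sum_distrib_left)
  then show ?thesis by (rule linear_conv_bounded_linear[THEN iffD1])
qed

lemma Omega_vertical: "fst a = 0 \<Longrightarrow> fst u = 0 \<Longrightarrow> fst v = 0 \<Longrightarrow> Omega a u v = 0"
  by (simp add: Omega_def wedge3_def dt_def)

lemma Omega_unit_time: "Omega a v (1, 0) = - (hamiltonian_covector a \<bullet> v)"
  by (simp add: Omega_expand hamiltonian_covector_def dp_def dq_def dt_def inner_prod_def inner_vec_def
      sum_negf[symmetric] sum_subtractf[symmetric] sum.distrib[symmetric] algebra_simps)

lemma Omega_connection:
  assumes "fst a = 1"
  shows "Omega a u v = fst u * (hamiltonian_covector a \<bullet> v) - fst v * (hamiltonian_covector a \<bullet> u)
    + snd (snd u) \<bullet> fst (snd v) - snd (snd v) \<bullet> fst (snd u)"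
  using assms
  by (simp add: Omega_expand hamiltonian_covector_def dp_def dq_def dt_def inner_prod_def inner_vec_def
      sum_distrib_left sum_negf[symmetric] sum_subtractf[symmetric] sum.distrib[symmetric] algebra_simps)

lemma connection_frechet_derivative_fst:
  assumes "connection_on W \<gamma>" "open W" "y \<in> W"
  shows "fst (frechet_derivative \<gamma> (at y) c) = 0"
proof -
  have "((\<lambda>x. fst (\<gamma> x)) has_derivative (\<lambda>c. fst (frechet_derivative \<gamma> (at y) c))) (at y)"
    using assms smooth_on_imp_differentiable
    by (intro has_derivative_fst) (auto simp: connection_on_def frechet_derivative_works)
  moreover have "((\<lambda>x. fst (\<gamma> x)) has_derivative (\<lambda>c. 0)) (at y)"
    by (rule has_derivative_transform_within_open[OF has_derivative_const assms(2,3)])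
      (use assms(1) in \<open>simp add: connection_on_def\<close>)
  ultimately show ?thesis
    by (metis has_derivative_unique)
qed

lemma canonical_connection_symmetric:
  assumes \<gamma>: "canonical_connection_on W \<gamma>" and W: "open W" "y \<in> W"
    and "fst u = 0" "fst v = 0"
  shows "frechet_derivative (\<lambda>x. hamiltonian_covector (\<gamma> x)) (at y) u \<bullet> v
    = frechet_derivative (\<lambda>x. hamiltonian_covector (\<gamma> x)) (at y) v \<bullet> u"
proof -
  let ?\<gamma>' = "frechet_derivative \<gamma> (at y)" and ?e = "(1, 0) :: 'a vs"
  have \<gamma>': "(\<gamma> has_derivative ?\<gamma>') (at y)"
    using \<gamma> W smooth_on_imp_differentiable
    by (auto simp: canonical_connection_on_def connection_on_def frechet_derivative_works)
  have covector': "frechet_derivative (\<lambda>x. hamiltonian_covector (\<gamma> x)) (at y) c = hamiltonian_covector (?\<gamma>' c)" for c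
    by (rule frechet_derivative_at_apply[OF
          bounded_linear.has_derivative[OF bounded_linear_hamiltonian_covector \<gamma>']])
  have Omega': "frechet_derivative (\<lambda>x. contr_Omega \<gamma> x a b) (at y) c = Omega (?\<gamma>' c) a b" for a b c
    unfolding contr_Omega_def
    by (rule frechet_derivative_at_apply[OF bounded_linear.has_derivative[OF bounded_linear_Omega_left \<gamma>']])
  have "Omega (?\<gamma>' ?e) u v = 0"
    using assms(4,5) connection_frechet_derivative_fst[OF _ W] \<gamma>
    by (intro Omega_vertical) (auto simp: canonical_connection_on_def)
  moreover have "d2 (contr_Omega \<gamma>) y u v ?e = 0"
    using \<gamma> W unfolding canonical_connection_on_def by blast
  ultimately have "Omega (?\<gamma>' u) v ?e = Omega (?\<gamma>' v) u ?e"
    unfolding d2_def Omega' by simp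
  then show ?thesis
    by (simp add: covector' Omega_unit_time)
qed

lemma closed1_diff_ham_form:
  assumes H: "\<And>x. x \<in> U \<Longrightarrow> H differentiable at x"
    and \<H>: "\<And>x. x \<in> U \<Longrightarrow> \<H> differentiable at x"
    and dH: "\<And>x u v. x \<in> U \<Longrightarrow> d1 H x u v = contr_Omega \<gamma> x u v"
    and \<gamma>: "\<And>x. x \<in> U \<Longrightarrow> fst (\<gamma> x) = 1"
    and \<H>': "\<And>x v. x \<in> U \<Longrightarrow> fst v = 0 \<Longrightarrow> frechet_derivative \<H> (at x) v = hamiltonian_covector (\<gamma> x) \<bullet> v"
  shows "closed1 U (\<lambda>y. H y - ham_form \<H> y)"
  unfolding closed1_def
proof (intro ballI allI)
  fix x u v assume "x \<in> U"
  let ?H' = "frechet_derivative H (at x)" and ?\<H>' = "frechet_derivative \<H> (at x)"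
    and ?A = "hamiltonian_covector (\<gamma> x)"
  have "((\<lambda>y. H y - ham_form \<H> y) has_derivative (\<lambda>u. ?H' u - (- ?\<H>' u, snd (snd u), 0))) (at x)"
    unfolding ham_form_def using H[OF \<open>x \<in> U\<close>] \<H>[OF \<open>x \<in> U\<close>]
    by (auto intro!: derivative_eq_intros simp: frechet_derivative_works)
  then have d1_diff: "d1 (\<lambda>y. H y - ham_form \<H> y) x u v = (?H' u \<bullet> v - ?H' v \<bullet> u)
      + (?\<H>' u * fst v - ?\<H>' v * fst u) - (snd (snd u) \<bullet> fst (snd v) - snd (snd v) \<bullet> fst (snd u))"
    by (simp add: d1_def frechet_derivative_at_apply inner_prod_def algebra_simps)
  have decompose: "?\<H>' w = ?A \<bullet> w + fst w * ?\<H>' (1, 0)" for w :: "'a vs"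
  proof -
    have lin: "linear ?\<H>'"
      by (rule linear_frechet_derivative[OF \<H>[OF \<open>x \<in> U\<close>]])
    have "?\<H>' w = ?\<H>' ((0, snd w) + fst w *\<^sub>R (1, 0))"
      by simp
    also have "\<dots> = ?\<H>' (0, snd w) + fst w * ?\<H>' (1, 0)"
      by (simp only: linear_add[OF lin] linear_scale[OF lin] real_scaleR_def)
    also have "?\<H>' (0, snd w) = ?A \<bullet> w"
      using \<H>'[OF \<open>x \<in> U\<close>, of "(0, snd w)"] by (simp add: hamiltonian_covector_def inner_prod_def)
    finally show ?thesis .
  qed
  have "?H' u \<bullet> v - ?H' v \<bullet> u = Omega (\<gamma> x) u v"
    using dH[OF \<open>x \<in> U\<close>] by (simp add: d1_def contr_Omega_def)
  then show "d1 (\<lambda>y. H y - ham_form \<H> y) x u v = 0"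
    unfolding d1_diff decompose[of u] decompose[of v]
    using Omega_connection[OF \<gamma>[OF \<open>x \<in> U\<close>], of u v] by (simp add: algebra_simps)
qed

theorem mainTheorem5:
  fixes W :: "'n::finite vs set" and H :: "'n vs \<Rightarrow> 'n vs"
  assumes "open W"
    and "locally_hamiltonian_form_on W H"
  shows "\<forall>x\<in>W. \<exists>U. open U \<and> x \<in> U \<and> U \<subseteq> W \<and>
           (\<exists>\<H> :: 'n vs \<Rightarrow> real. smooth_on U \<H> \<and> closed1 U (\<lambda>y. H y - ham_form \<H> y))"
proof
  fix x0 assume "x0 \<in> W"
  obtain \<gamma> where \<gamma>: "canonical_connection_on W \<gamma>" and H: "smooth_on W H"
    and dH: "\<forall>x\<in>W. \<forall>u v. d1 H x u v = contr_Omega \<gamma> x u v"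
    using assms(2) unfolding locally_hamiltonian_form_on_def by blast
  have covector: "smooth_on W (\<lambda>x. hamiltonian_covector (\<gamma> x))"
    using \<gamma> by (intro smooth_on_bounded_linear_compose[OF assms(1) bounded_linear_hamiltonian_covector])
      (simp add: canonical_connection_on_def connection_on_def)
  obtain U \<H> where U: "open U" "x0 \<in> U" "U \<subseteq> W" "smooth_on U \<H>"
    and \<H>': "\<forall>x\<in>U. \<forall>v. fst v = 0 \<longrightarrow> frechet_derivative \<H> (at x) v = hamiltonian_covector (\<gamma> x) \<bullet> v"
    using fibrewise_poincare_lemma[OF assms(1) \<open>x0 \<in> W\<close> covector canonical_connection_symmetric[OF \<gamma> assms(1)]]
    by blast
  have "closed1 U (\<lambda>y. H y - ham_form \<H> y)"
  proof (rule closed1_diff_ham_form)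
    fix x assume "x \<in> U"
    then have "x \<in> W" using U(3) by blast
    show "H differentiable at x" by (rule smooth_on_imp_differentiable[OF H \<open>x \<in> W\<close>])
    show "\<H> differentiable at x" by (rule smooth_on_imp_differentiable[OF U(4) \<open>x \<in> U\<close>])
    show "d1 H x u v = contr_Omega \<gamma> x u v" for u v using dH \<open>x \<in> W\<close> by blast
    show "fst (\<gamma> x) = 1"
      using \<gamma> \<open>x \<in> W\<close> by (simp add: canonical_connection_on_def connection_on_def)
    show "frechet_derivative \<H> (at x) v = hamiltonian_covector (\<gamma> x) \<bullet> v" if "fst v = 0" for v
      using \<H>' \<open>x \<in> U\<close> that by blast
  qed
  then show "\<exists>U. open U \<and> x0 \<in> U \<and> U \<subseteq> W \<and>
      (\<exists>\<H> :: 'n vs \<Rightarrow> real. smooth_on U \<H> \<and> closed1 U (\<lambda>y. H y - ham_form \<H> y))"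
    using U by blast
qed

end
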